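(* Let $(M,g,S)$, $p$, $u$ and $\varphi$ be as in the context, and let $\alpha_1$ be the subspace of $T_pM$ spanned by $u,Su,S^2u$. Then the vectors $$e_1=u,\qquad e_2=\frac{(-\cos\varphi)u+Su-(\cos\varphi)S^2u}{\sqrt{1-2\cos^2\varphi}},\qquad e_3=S^2u$$ form an orthonormal basis of $\alpha_1$ with respect to $g$.
   Context: $M$ is a 4-dimensional differentiable manifold with a positive definite metric $g$ and a tensor field $S$ of type $(1,1)$ whose components in some local coordinate system form the matrix with rows $(0,1,0,0)$, $(0,0,1,0)$, $(0,0,0,1)$, $(-1,0,0,0)$; hence $S^4=-\mathrm{id}$, and $g(Su,Sv)=g(u,v)$ for all vector fields $u,v$. Here $p\in M$ and $u\in T_pM$ is a unit vector (w.r.t. $g$) inducing an $S$-basis, i.e. $\{u,Su,S^2u,S^3u\}$ is a basis of $T_pM$, and $\varphi=\angle(u,Su)$ is the $g$-angle, so $\cos\varphi=g(u,Su)$. It is known that then $\angle(u,Su)=\angle(Su,S^2u)=\angle(S^2u,S^3u)=\pi-\angle(S^3u,u)$, $\angle(u,S^2u)=\angle(Su,S^3u)=\frac{\pi}{2}$, and $\frac{\pi}{4}<\varphi<\frac{3\pi}{4}$. *)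

theory Defs
  imports "HOL-Analysis.Analysis"
begin

text \<open>The tangent space T_pM is modelled in the given local coordinates as real^4.
  The structure tensor S at p has the coordinate matrix with rows
  (0,1,0,0), (0,0,1,0), (0,0,0,1), (-1,0,0,0).\<close>

definition S_mat :: "real^4^4" where
  "S_mat = vector [vector [0,1,0,0], vector [0,0,1,0], vector [0,0,0,1], vector [-1,0,0,0]]"

definition S_op :: "real^4 \<Rightarrow> real^4" where
  "S_op x = S_mat *v x"

definition pos_def_metric :: "(real^4 \<Rightarrow> real^4 \<Rightarrow> real) \<Rightarrow> bool" where
  "pos_def_metric g \<longleftrightarrow> bilinear g \<and> (\<forall>x y. g x y = g y x) \<and> (\<forall>x. x \<noteq> 0 \<longrightarrow> g x x > 0)"

definition g_angle :: "(real^4 \<Rightarrow> real^4 \<Rightarrow> real) \<Rightarrow> real^4 \<Rightarrow> real^4 \<Rightarrow> real" where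
  "g_angle g x y = arccos (g x y / (sqrt (g x x) * sqrt (g y y)))"

end

theory Submission
  imports Defs
begin

text \<open>Since \<open>S\<close> is a \<open>g\<close>-isometry with \<open>S\<^sup>4 = -id\<close>, the vectors \<open>u\<close> and \<open>S\<^sup>2u\<close> are orthonormal,
  while \<open>Su\<close> is a unit vector making the same inner product \<open>cos \<phi>\<close> with both of them. Hence
  \<open>e\<^sub>2\<close> is the Gram--Schmidt normalisation of \<open>Su\<close> against \<open>u, S\<^sup>2u\<close>: the component
  \<open>Su - cos \<phi> u - cos \<phi> S\<^sup>2u\<close> is orthogonal to both and has squared length \<open>1 - 2cos\<^sup>2\<phi>\<close>,
  which is positive because the \<open>S\<close>-basis is linearly independent.\<close>

lemma S_op_pow4: "S_op (S_op (S_op (S_op x))) = - x"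
  by (simp add: S_op_def S_mat_def vec_eq_iff matrix_vector_mult_def forall_4 sum_4 vector_def)

locale symmetric_bilinear_form =
  fixes g :: "'a::real_vector \<Rightarrow> 'a \<Rightarrow> real"
  assumes bilinear: "bilinear g"
    and symmetric: "g x y = g y x"
begin

lemmas bilinear_simps =
  bilinear_ladd[OF bilinear] bilinear_radd[OF bilinear]
  bilinear_lmul[OF bilinear] bilinear_rmul[OF bilinear]
  bilinear_lsub[OF bilinear] bilinear_rsub[OF bilinear]
  bilinear_lneg[OF bilinear] bilinear_rneg[OF bilinear]

lemma orthogonal_double_iterate:
  assumes isometry: "\<And>x y. g (T x) (T y) = g x y"
    and quarter_turn: "\<And>x. T (T (T (T x))) = - x"
  shows "g x (T (T x)) = 0"
proof -
  have "g x (T (T x)) = g (T (T x)) (T (T (T (T x))))"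
    using isometry by simp
  also have "\<dots> = - g x (T (T x))"
    using quarter_turn symmetric[of x] by (simp add: bilinear_simps)
  finally show ?thesis by simp
qed

lemma gram_schmidt_step:
  fixes u b a :: 'a
  assumes "g u u = 1" "g b b = 1" "g u b = 0"
  defines "w \<equiv> a - g a u *\<^sub>R u - g a b *\<^sub>R b"
  shows "g u w = 0" "g b w = 0" "g w w = g a a - (g a u)\<^sup>2 - (g a b)\<^sup>2"
  using assms symmetric[of u a] symmetric[of b a] symmetric[of b u]
  by (simp_all add: bilinear_simps algebra_simps power2_eq_square)

lemma normalize_unit:
  assumes "g w w > 0"
  shows "g ((1 / sqrt (g w w)) *\<^sub>R w) ((1 / sqrt (g w w)) *\<^sub>R w) = 1"
  using assms by (simp add: bilinear_simps)

end

lemma independent_combination_nonzero: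
  assumes "independent A" "a \<in> A" "u \<in> A" "b \<in> A" "a \<noteq> u" "a \<noteq> b"
  shows "a - x *\<^sub>R u - y *\<^sub>R b \<noteq> 0"
proof
  assume "a - x *\<^sub>R u - y *\<^sub>R b = 0"
  then have "a = x *\<^sub>R u + y *\<^sub>R b"
    by (simp add: algebra_simps)
  also have "\<dots> \<in> span (A - {a})"
    using assms by (intro span_add span_mul span_base) auto
  finally show False
    using assms(1,2) unfolding dependent_def by blast
qed

lemma span_replace_by_combination:
  assumes "k \<noteq> 0" and w: "w = a - x *\<^sub>R u - y *\<^sub>R b"
  shows "span {u, k *\<^sub>R w, b} = span {u, a, b}"
proof -
  have "a = (1 / k) *\<^sub>R (k *\<^sub>R w) + x *\<^sub>R u + y *\<^sub>R b"
    using assms by (simp add: algebra_simps)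
  also have "\<dots> \<in> span {u, k *\<^sub>R w, b}"
    by (intro span_add span_mul span_base) auto
  finally have "a \<in> span {u, k *\<^sub>R w, b}" .
  moreover have "k *\<^sub>R w \<in> span {u, a, b}"
    unfolding w by (intro span_mul span_diff span_base) auto
  ultimately show ?thesis
    unfolding span_eq by (auto intro: span_base)
qed

lemma cos_g_angle_unit:
  assumes "g x x = 1" "g y y = 1" "\<bar>g x y\<bar> \<le> 1"
  shows "cos (g_angle g x y) = g x y"
  using assms by (simp add: g_angle_def cos_arccos_abs)

theorem lemma4p1:
  fixes g :: "real^4 \<Rightarrow> real^4 \<Rightarrow> real" and u :: "real^4" and \<phi> :: real
  assumes metric: "pos_def_metric g"
    and compat: "\<And>x y. g (S_op x) (S_op y) = g x y"
    and unit: "g u u = 1"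
    and basis: "card {u, S_op u, S_op (S_op u), S_op (S_op (S_op u))} = 4"
       "independent {u, S_op u, S_op (S_op u), S_op (S_op (S_op u))}"
       "span {u, S_op u, S_op (S_op u), S_op (S_op (S_op u))} = UNIV"
    and phi: "\<phi> = g_angle g u (S_op u)"
  defines "e1 \<equiv> u"
    and "e2 \<equiv> (1 / sqrt (1 - 2 * (cos \<phi>)\<^sup>2)) *\<^sub>R
               ((- cos \<phi>) *\<^sub>R u + S_op u - (cos \<phi>) *\<^sub>R S_op (S_op u))"
    and "e3 \<equiv> S_op (S_op u)"
  shows "g e1 e1 = 1 \<and> g e2 e2 = 1 \<and> g e3 e3 = 1 \<and>
         g e1 e2 = 0 \<and> g e1 e3 = 0 \<and> g e2 e3 = 0 \<and>
         span {e1, e2, e3} = span {u, S_op u, S_op (S_op u)}"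
proof -
  interpret symmetric_bilinear_form g
    using metric unfolding pos_def_metric_def by unfold_locales auto
  define c where "c = g u (S_op u)"
  define w where "w = S_op u - c *\<^sub>R u - c *\<^sub>R S_op (S_op u)"
  have unit2: "g (S_op (S_op u)) (S_op (S_op u)) = 1" and orth_square: "g u (S_op (S_op u)) = 0"
    using unit compat orthogonal_double_iterate[of S_op u] S_op_pow4 by auto
  moreover have "g (S_op u) u = c" "g (S_op u) (S_op (S_op u)) = c"
    using compat symmetric c_def by auto
  ultimately have orth: "g u w = 0" "g (S_op (S_op u)) w = 0" and ww: "g w w = 1 - 2 * c\<^sup>2"
    using gram_schmidt_step[of u "S_op (S_op u)" "S_op u"] unit compat
    unfolding w_def by simp_all
  have "w \<noteq> 0"
    unfolding w_def using basis(1)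
    by (intro independent_combination_nonzero[OF basis(2)])
      (auto simp: card_insert_if split: if_splits)
  then have pos: "g w w > 0"
    using metric unfolding pos_def_metric_def by blast
  then have "cos \<phi> = c"
    using ww unit compat abs_square_le_1[of c] unfolding phi c_def
    by (intro cos_g_angle_unit) auto
  then have e2: "e2 = (1 / sqrt (g w w)) *\<^sub>R w"
    unfolding e2_def ww by (simp add: w_def algebra_simps)
  have "g e2 e2 = 1"
    unfolding e2 by (rule normalize_unit[OF pos])
  moreover have "g e1 e2 = 0" "g e2 e3 = 0"
    unfolding e1_def e2 e3_def using orth symmetric by (simp_all add: bilinear_simps)
  moreover have "span {e1, e2, e3} = span {u, S_op u, S_op (S_op u)}"
    unfolding e1_def e2 e3_def using pos w_def by (intro span_replace_by_combination) auto
  ultimately show ?thesis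
    using unit unit2 orth_square unfolding e1_def e3_def by simp
qed

end
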